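(* Let $X,Y$ be countable discrete metric spaces and $d\in D(X,Y)$. Then $\mathbb K(H_X,H_Y)\subset M_d(X,Y)$. Moreover, if $\mathbb K(H_X,H_Y)=M_d(X,Y)$, then there exists $L>0$ such that for every injective map $f:X\to Y$ the set $\{x\in X: d(x,f(x))\le L\}$ is finite.
   Context: $H_X=l^2(X)$ with basis $\{\delta_x\}$; $\mathbb K(H_X,H_Y)$ is the space of compact operators $H_X\to H_Y$. $D(X,Y)$ is the set of metrics on $X\sqcup Y$ restricting to $d_X$ and $d_Y$. For $T:H_X\to H_Y$ bounded, $T_{yx}=\langle T\delta_x,\delta_y\rangle$; $T$ has propagation less than $L$ w.r.t. $d$ if $T_{yx}=0$ whenever $d(x,y)\ge L$. $M_d(X,Y)$ is the norm closure in $\mathbb B(H_X,H_Y)$ of the bounded operators of finite propagation w.r.t. $d$. *)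

theory Defs
  imports "HOL-Analysis.Analysis"
begin

definition discrete_metric_space :: "'a set \<Rightarrow> ('a \<Rightarrow> 'a \<Rightarrow> real) \<Rightarrow> bool" where
  "discrete_metric_space X dX \<longleftrightarrow> Metric_space X dX \<and>
     (\<forall>x\<in>X. \<exists>e>0. \<forall>x'\<in>X. dX x x' < e \<longrightarrow> x' = x)"

definition Dmetrics :: "'a set \<Rightarrow> ('a \<Rightarrow> 'a \<Rightarrow> real) \<Rightarrow> 'b set \<Rightarrow> ('b \<Rightarrow> 'b \<Rightarrow> real)
    \<Rightarrow> (('a + 'b) \<Rightarrow> ('a + 'b) \<Rightarrow> real) set" where
  "Dmetrics X dX Y dY = {d. Metric_space (X <+> Y) d \<and>
     (\<forall>x\<in>X. \<forall>x'\<in>X. d (Inl x) (Inl x') = dX x x') \<and>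
     (\<forall>y\<in>Y. \<forall>y'\<in>Y. d (Inr y) (Inr y') = dY y y')}"

definition l2 :: "'a set \<Rightarrow> ('a \<Rightarrow> complex) set" where
  "l2 X = {f. (\<forall>x. x \<notin> X \<longrightarrow> f x = 0) \<and> (\<lambda>x. (cmod (f x))\<^sup>2) summable_on X}"

definition l2norm :: "'a set \<Rightarrow> ('a \<Rightarrow> complex) \<Rightarrow> real" where
  "l2norm X f = sqrt (infsum (\<lambda>x. (cmod (f x))\<^sup>2) X)"

definition l2dist :: "'a set \<Rightarrow> ('a \<Rightarrow> complex) \<Rightarrow> ('a \<Rightarrow> complex) \<Rightarrow> real" where
  "l2dist X f g = l2norm X (\<lambda>x. f x - g x)"

definition delta :: "'a \<Rightarrow> 'a \<Rightarrow> complex" where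
  "delta x = (\<lambda>z. if z = x then 1 else 0)"

text \<open>Bounded (linear) operators H_X \<rightarrow> H_Y; only the values on l2 X matter.\<close>
definition bounded_op :: "'a set \<Rightarrow> 'b set \<Rightarrow> (('a \<Rightarrow> complex) \<Rightarrow> ('b \<Rightarrow> complex)) \<Rightarrow> bool" where
  "bounded_op X Y T \<longleftrightarrow>
     (\<forall>f\<in>l2 X. T f \<in> l2 Y) \<and>
     (\<forall>f\<in>l2 X. \<forall>g\<in>l2 X. T (\<lambda>x. f x + g x) = (\<lambda>y. T f y + T g y)) \<and>
     (\<forall>f\<in>l2 X. \<forall>c::complex. T (\<lambda>x. c * f x) = (\<lambda>y. c * T f y)) \<and>
     (\<exists>C. \<forall>f\<in>l2 X. l2norm Y (T f) \<le> C * l2norm X f)"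

definition opnorm :: "'a set \<Rightarrow> 'b set \<Rightarrow> (('a \<Rightarrow> complex) \<Rightarrow> ('b \<Rightarrow> complex)) \<Rightarrow> real" where
  "opnorm X Y T = Sup {l2norm Y (T f) | f. f \<in> l2 X \<and> l2norm X f \<le> 1}"

definition matrix_coeff :: "(('a \<Rightarrow> complex) \<Rightarrow> ('b \<Rightarrow> complex)) \<Rightarrow> 'b \<Rightarrow> 'a \<Rightarrow> complex" where
  "matrix_coeff T y x = T (delta x) y"

definition finite_propagation ::
  "'a set \<Rightarrow> 'b set \<Rightarrow> (('a + 'b) \<Rightarrow> ('a + 'b) \<Rightarrow> real) \<Rightarrow> (('a \<Rightarrow> complex) \<Rightarrow> ('b \<Rightarrow> complex)) \<Rightarrow> bool" where
  "finite_propagation X Y d T \<longleftrightarrow>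
     (\<exists>L. \<forall>x\<in>X. \<forall>y\<in>Y. d (Inl x) (Inr y) \<ge> L \<longrightarrow> matrix_coeff T y x = 0)"

text \<open>M_d(X,Y): norm closure (in B(H_X,H_Y)) of the bounded finite propagation operators.\<close>
definition in_Md ::
  "'a set \<Rightarrow> 'b set \<Rightarrow> (('a + 'b) \<Rightarrow> ('a + 'b) \<Rightarrow> real) \<Rightarrow> (('a \<Rightarrow> complex) \<Rightarrow> ('b \<Rightarrow> complex)) \<Rightarrow> bool" where
  "in_Md X Y d T \<longleftrightarrow> bounded_op X Y T \<and>
     (\<forall>\<epsilon>>0. \<exists>S. bounded_op X Y S \<and> finite_propagation X Y d S \<and>
        opnorm X Y (\<lambda>f y. T f y - S f y) < \<epsilon>)"

definition compact_op :: "'a set \<Rightarrow> 'b set \<Rightarrow> (('a \<Rightarrow> complex) \<Rightarrow> ('b \<Rightarrow> complex)) \<Rightarrow> bool" where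
  "compact_op X Y T \<longleftrightarrow> bounded_op X Y T \<and>
     compactin (Metric_space.mtopology (l2 Y) (l2dist Y))
       ((Metric_space.mtopology (l2 Y) (l2dist Y)) closure_of
          (T ` {f \<in> l2 X. l2norm X f \<le> 1}))"

end

theory Submission
  imports Defs
begin

text \<open>A compact \<open>T\<close> is a norm limit of its compressions \<open>P\<^sub>G T P\<^sub>F\<close> to finite sets
\<open>F \<subseteq> X\<close>, \<open>G \<subseteq> Y\<close>: total boundedness of the image of the unit ball gives a finite \<open>G\<close> off
which all \<open>T f\<close> have uniformly small tails, and square-summability of the finitely many rows of
\<open>T\<close> indexed by \<open>G\<close> gives a finite \<open>F\<close> such that \<open>T\<close> is uniformly small at \<open>G\<close> on unit
vectors vanishing on \<open>F\<close>. A compression has finite propagation, since only the finitely many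
distances between \<open>F\<close> and \<open>G\<close> occur.

Conversely, for injective \<open>f\<close> and any \<open>L\<close>, the partial translation \<open>\<delta>\<^sub>x \<mapsto> \<delta>\<^sub>f\<^sub>x\<close> on
\<open>A = {x. d(x, f x) \<le> L}\<close> has propagation at most \<open>L\<close> and so lies in \<open>M\<^sub>d\<close>. If it is compact,
the image of the unit ball is totally bounded, yet it contains the pairwise separated vectors
\<open>\<delta>\<^sub>f\<^sub>x\<close>, \<open>x \<in> A\<close>; so \<open>A\<close> is finite. Thus every \<open>L\<close> works.\<close>

section \<open>The space \<open>l\<^sup>2(X)\<close>\<close>

definition restr :: "'a set \<Rightarrow> ('a \<Rightarrow> complex) \<Rightarrow> 'a \<Rightarrow> complex" where
  "restr A f = (\<lambda>x. if x \<in> A then f x else 0)"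

lemma l2D:
  assumes "f \<in> l2 X"
  shows "(\<lambda>x. (cmod (f x))\<^sup>2) summable_on X" and "x \<notin> X \<Longrightarrow> f x = 0"
  using assms by (auto simp: l2_def)

lemma l2I: "(\<lambda>x. (cmod (f x))\<^sup>2) summable_on X \<Longrightarrow> (\<And>x. x \<notin> X \<Longrightarrow> f x = 0) \<Longrightarrow> f \<in> l2 X"
  by (auto simp: l2_def)

lemma l2_zero: "(\<lambda>x. 0) \<in> l2 X"
  by (auto simp: l2_def)

lemma l2norm_zero: "l2norm X (\<lambda>x. 0) = 0"
  by (simp add: l2norm_def)

lemma l2norm_nonneg: "0 \<le> l2norm X f"
  unfolding l2norm_def by (simp add: infsum_nonneg)

lemma finite_sum_le_l2norm_sq:
  assumes "f \<in> l2 X" "finite F" "F \<subseteq> X"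
  shows "(\<Sum>x\<in>F. (cmod (f x))\<^sup>2) \<le> (l2norm X f)\<^sup>2"
proof -
  have "(\<Sum>x\<in>F. (cmod (f x))\<^sup>2) \<le> infsum (\<lambda>x. (cmod (f x))\<^sup>2) X"
    by (rule finite_sum_le_infsum) (use assms l2D in auto)
  thus ?thesis by (simp add: l2norm_def infsum_nonneg)
qed

lemma L2_set_le_l2norm:
  assumes "f \<in> l2 X" "finite F" "F \<subseteq> X"
  shows "L2_set (\<lambda>x. cmod (f x)) F \<le> l2norm X f"
  using real_sqrt_le_mono[OF finite_sum_le_l2norm_sq[OF assms]] l2norm_nonneg[of X f]
  by (simp add: L2_set_def)

lemma norm_le_l2norm:
  assumes "f \<in> l2 X"
  shows "cmod (f x) \<le> l2norm X f"
proof (cases "x \<in> X")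
  case True
  thus ?thesis using L2_set_le_l2norm[OF assms, of "{x}"] by simp
qed (use assms in \<open>simp add: l2D(2) l2norm_nonneg\<close>)

lemma l2norm_le_if_finite_sums:
  assumes "(\<lambda>x. (cmod (f x))\<^sup>2) summable_on X" "0 \<le> B"
    and "\<And>F. finite F \<Longrightarrow> F \<subseteq> X \<Longrightarrow> L2_set (\<lambda>x. cmod (f x)) F \<le> B"
  shows "l2norm X f \<le> B"
proof -
  have "infsum (\<lambda>x. (cmod (f x))\<^sup>2) X \<le> B\<^sup>2"
  proof (rule infsum_le_finite_sums[OF assms(1)])
    fix F assume F: "finite F" "F \<subseteq> X"
    have "(\<Sum>x\<in>F. (cmod (f x))\<^sup>2) = (L2_set (\<lambda>x. cmod (f x)) F)\<^sup>2"
      by (simp add: L2_set_def sum_nonneg)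
    also have "\<dots> \<le> B\<^sup>2" using assms(3)[OF F] by (intro power_mono L2_set_nonneg)
    finally show "(\<Sum>x\<in>F. (cmod (f x))\<^sup>2) \<le> B\<^sup>2" .
  qed
  thus ?thesis using assms(2) real_sqrt_le_mono by (fastforce simp: l2norm_def)
qed

lemma l2_add:
  assumes "f \<in> l2 X" "g \<in> l2 X"
  shows "(\<lambda>x. f x + g x) \<in> l2 X"
proof (rule l2I)
  have "(\<lambda>x. 2 * (cmod (f x))\<^sup>2 + 2 * (cmod (g x))\<^sup>2) summable_on X"
    by (intro summable_on_add summable_on_cmult_right l2D assms)
  thus "(\<lambda>x. (cmod (f x + g x))\<^sup>2) summable_on X"
  proof (rule summable_on_comparison_test)
    fix x
    have "(cmod (f x + g x))\<^sup>2 \<le> (cmod (f x) + cmod (g x))\<^sup>2"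
      by (simp add: power_mono norm_triangle_ineq)
    also have "\<dots> \<le> 2 * (cmod (f x))\<^sup>2 + 2 * (cmod (g x))\<^sup>2"
      by (smt (verit) sum_squares_bound zero_le_power2 power2_sum)
    finally show "(cmod (f x + g x))\<^sup>2 \<le> 2 * (cmod (f x))\<^sup>2 + 2 * (cmod (g x))\<^sup>2" .
  qed simp
qed (use assms in \<open>simp add: l2D(2)\<close>)

lemma l2_scale:
  assumes "f \<in> l2 X"
  shows "(\<lambda>x. c * f x) \<in> l2 X"
proof (rule l2I)
  have "(\<lambda>x. (cmod c)\<^sup>2 * (cmod (f x))\<^sup>2) summable_on X"
    by (intro summable_on_cmult_right l2D assms)
  thus "(\<lambda>x. (cmod (c * f x))\<^sup>2) summable_on X"
    by (simp add: norm_mult power_mult_distrib)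
qed (use assms in \<open>simp add: l2D(2)\<close>)

lemma l2_diff: "f \<in> l2 X \<Longrightarrow> g \<in> l2 X \<Longrightarrow> (\<lambda>x. f x - g x) \<in> l2 X"
  using l2_add[of f X "\<lambda>x. -1 * g x"] l2_scale[of g X "-1"] by simp

lemma l2norm_triangle:
  assumes "f \<in> l2 X" "g \<in> l2 X"
  shows "l2norm X (\<lambda>x. f x + g x) \<le> l2norm X f + l2norm X g"
proof (rule l2norm_le_if_finite_sums[OF l2D(1)[OF l2_add[OF assms]]])
  show "0 \<le> l2norm X f + l2norm X g" by (simp add: l2norm_nonneg add_nonneg_nonneg)
  fix F assume F: "finite F" "F \<subseteq> X"
  have "L2_set (\<lambda>x. cmod (f x + g x)) F \<le> L2_set (\<lambda>x. cmod (f x) + cmod (g x)) F"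
    by (rule L2_set_mono) (auto intro: norm_triangle_ineq)
  also have "\<dots> \<le> L2_set (\<lambda>x. cmod (f x)) F + L2_set (\<lambda>x. cmod (g x)) F"
    by (rule L2_set_triangle_ineq)
  also have "\<dots> \<le> l2norm X f + l2norm X g"
    by (intro add_mono L2_set_le_l2norm assms F)
  finally show "L2_set (\<lambda>x. cmod (f x + g x)) F \<le> l2norm X f + l2norm X g" .
qed

lemma l2_restr: "f \<in> l2 X \<Longrightarrow> restr A f \<in> l2 X"
  by (rule l2I, rule summable_on_comparison_test[OF l2D(1)]) (auto simp: restr_def l2D)

lemma l2norm_restr_le:
  assumes "f \<in> l2 X"
  shows "l2norm X (restr A f) \<le> l2norm X f"
proof (rule l2norm_le_if_finite_sums[OF l2D(1)[OF l2_restr[OF assms]] l2norm_nonneg])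
  fix F assume F: "finite F" "F \<subseteq> X"
  have "L2_set (\<lambda>x. cmod (restr A f x)) F \<le> L2_set (\<lambda>x. cmod (f x)) F"
    by (rule L2_set_mono) (auto simp: restr_def)
  also have "\<dots> \<le> l2norm X f" by (rule L2_set_le_l2norm[OF assms F])
  finally show "L2_set (\<lambda>x. cmod (restr A f x)) F \<le> l2norm X f" .
qed

lemma restr_add_restr_Compl: "(\<lambda>x. restr A f x + restr (-A) f x) = f"
  by (auto simp: restr_def)

lemma restr_finite_eq_sum: "finite H \<Longrightarrow> restr H g = (\<lambda>z. \<Sum>x\<in>H. g x * delta x z)"
  by (auto simp: restr_def delta_def fun_eq_iff if_distrib cong: if_cong)

lemma
  assumes "finite H" "H \<subseteq> X" "\<And>x. x \<notin> H \<Longrightarrow> f x = 0"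
  shows l2_finite_support: "f \<in> l2 X"
    and l2norm_finite_support: "l2norm X f = L2_set (\<lambda>x. cmod (f x)) H"
proof -
  have "(\<lambda>x. (cmod (f x))\<^sup>2) summable_on X \<longleftrightarrow> (\<lambda>x. (cmod (f x))\<^sup>2) summable_on H"
    by (rule summable_on_cong_neutral) (use assms in auto)
  thus "f \<in> l2 X" using assms by (auto simp: l2_def)
  have "infsum (\<lambda>x. (cmod (f x))\<^sup>2) X = infsum (\<lambda>x. (cmod (f x))\<^sup>2) H"
    by (rule infsum_cong_neutral) (use assms in auto)
  thus "l2norm X f = L2_set (\<lambda>x. cmod (f x)) H"
    using assms by (simp add: l2norm_def L2_set_def)
qed

lemma delta_l2: "x \<in> X \<Longrightarrow> delta x \<in> l2 X"
  by (rule l2_finite_support[of "{x}"]) (auto simp: delta_def)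

lemma l2norm_delta: "x \<in> X \<Longrightarrow> l2norm X (delta x) = 1"
  by (subst l2norm_finite_support[of "{x}"]) (auto simp: delta_def)

lemma Metric_space_l2: "Metric_space (l2 X) (l2dist X)"
proof
  fix f g h
  show "0 \<le> l2dist X f g" by (simp add: l2dist_def l2norm_nonneg)
  show "l2dist X f g = l2dist X g f"
    by (simp add: l2dist_def l2norm_def norm_minus_commute)
  assume f: "f \<in> l2 X" and g: "g \<in> l2 X"
  show "l2dist X f g = 0 \<longleftrightarrow> f = g"
  proof
    assume "l2dist X f g = 0"
    hence "cmod (f x - g x) \<le> 0" for x
      using norm_le_l2norm[OF l2_diff[OF f g]] by (simp add: l2dist_def)
    thus "f = g" by auto
  qed (simp add: l2dist_def l2norm_def)
  assume h: "h \<in> l2 X"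
  have "l2norm X (\<lambda>x. (f x - g x) + (g x - h x))
          \<le> l2norm X (\<lambda>x. f x - g x) + l2norm X (\<lambda>x. g x - h x)"
    by (intro l2norm_triangle l2_diff f g h)
  thus "l2dist X f h \<le> l2dist X f g + l2dist X g h" by (simp add: l2dist_def)
qed

lemma l2dist_delta_ge_1:
  assumes "y \<in> Y" "y' \<in> Y" "y \<noteq> y'"
  shows "1 \<le> l2dist Y (delta y) (delta y')"
  using norm_le_l2norm[OF l2_diff[OF delta_l2 delta_l2], of y Y y' y] assms
  by (simp add: l2dist_def delta_def)

lemma summable_on_small_tails:
  fixes h :: "'a \<Rightarrow> real"
  assumes s: "h summable_on X" and nonneg: "\<And>x. 0 \<le> h x" and "\<eta> > 0"
  obtains G where "finite G" "G \<subseteq> X" "\<And>F. finite F \<Longrightarrow> F \<subseteq> X - G \<Longrightarrow> sum h F \<le> \<eta>"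
proof -
  have "\<exists>G. finite G \<and> G \<subseteq> X \<and> sum h G > infsum h X - \<eta>"
  proof (rule ccontr)
    assume "\<not> ?thesis"
    hence "infsum h X \<le> infsum h X - \<eta>"
      by (intro infsum_le_finite_sums[OF s]) (auto simp: not_less)
    thus False using assms by simp
  qed
  then obtain G where G: "finite G" "G \<subseteq> X" "sum h G > infsum h X - \<eta>" by blast
  have "sum h F \<le> \<eta>" if F: "finite F" "F \<subseteq> X - G" for F
  proof -
    have "sum h G + sum h F = sum h (G \<union> F)"
      using F G by (intro sum.union_disjoint[symmetric]) auto
    also have "\<dots> \<le> infsum h X"
      by (rule finite_sum_le_infsum[OF s]) (use F G nonneg in auto)
    finally show ?thesis using G by simp
  qed
  thus ?thesis using G that by blast
qed

lemma l2_small_tail: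
  assumes "h \<in> l2 X" "\<eta> > 0"
  obtains G where "finite G" "G \<subseteq> X" "l2norm X (restr (-G) h) \<le> \<eta>"
proof -
  obtain G where G: "finite G" "G \<subseteq> X"
    and tail: "\<And>F. finite F \<Longrightarrow> F \<subseteq> X - G \<Longrightarrow> (\<Sum>x\<in>F. (cmod (h x))\<^sup>2) \<le> \<eta>\<^sup>2"
    using summable_on_small_tails[OF l2D(1)[OF assms(1)], of "\<eta>\<^sup>2"] assms by auto
  have "l2norm X (restr (-G) h) \<le> \<eta>"
  proof (rule l2norm_le_if_finite_sums[OF l2D(1)[OF l2_restr[OF assms(1)]]])
    fix F assume F: "finite F" "F \<subseteq> X"
    have "(\<Sum>x\<in>F. (cmod (restr (-G) h x))\<^sup>2) = (\<Sum>x\<in>F - G. (cmod (h x))\<^sup>2)"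
      using F by (intro sum.mono_neutral_cong_right) (auto simp: restr_def)
    also have "\<dots> \<le> \<eta>\<^sup>2" using F by (intro tail) auto
    finally show "L2_set (\<lambda>x. cmod (restr (-G) h x)) F \<le> \<eta>"
      using assms(2) by (simp add: L2_set_def real_sqrt_le_iff real_le_lsqrt)
  qed (use assms in simp)
  thus ?thesis using G that by blast
qed

section \<open>Bounded operators\<close>

lemma
  assumes "bounded_op X Y T" "f \<in> l2 X"
  shows bounded_op_l2: "T f \<in> l2 Y"
    and bounded_op_scale: "T (\<lambda>x. c * f x) = (\<lambda>y. c * T f y)"
  using assms by (simp_all add: bounded_op_def)

lemma bounded_op_add:
  "bounded_op X Y T \<Longrightarrow> f \<in> l2 X \<Longrightarrow> g \<in> l2 X \<Longrightarrow> T (\<lambda>x. f x + g x) = (\<lambda>y. T f y + T g y)"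
  by (simp add: bounded_op_def)

lemma bounded_op_zero: "bounded_op X Y T \<Longrightarrow> T (\<lambda>x. 0) = (\<lambda>y. 0)"
  using bounded_op_scale[OF _ l2_zero, of X Y T 0] by simp

lemma bounded_op_bound:
  assumes "bounded_op X Y T"
  obtains C where "C \<ge> 0" "\<And>f. f \<in> l2 X \<Longrightarrow> l2norm Y (T f) \<le> C * l2norm X f"
proof -
  obtain C where C: "\<forall>f\<in>l2 X. l2norm Y (T f) \<le> C * l2norm X f"
    using assms by (auto simp: bounded_op_def)
  have "l2norm Y (T f) \<le> max C 0 * l2norm X f" if "f \<in> l2 X" for f
  proof -
    have "C * l2norm X f \<le> max C 0 * l2norm X f"
      by (intro mult_right_mono) (auto simp: l2norm_nonneg)
    thus ?thesis using C that by force
  qed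
  thus ?thesis by (intro that[of "max C 0"]) auto
qed

lemma bounded_op_restr_split:
  "bounded_op X Y T \<Longrightarrow> f \<in> l2 X \<Longrightarrow> T f = (\<lambda>y. T (restr A f) y + T (restr (-A) f) y)"
proof -
  assume T: "bounded_op X Y T" and f: "f \<in> l2 X"
  have "T f = T (\<lambda>x. restr A f x + restr (-A) f x)" by (simp only: restr_add_restr_Compl)
  also have "\<dots> = (\<lambda>y. T (restr A f) y + T (restr (-A) f) y)"
    by (intro bounded_op_add[OF T] l2_restr f)
  finally show ?thesis .
qed

lemma bounded_op_finite_sum:
  assumes T: "bounded_op X Y T" and "finite H" "H \<subseteq> X"
  shows "T (\<lambda>z. \<Sum>x\<in>H. a x * delta x z) y = (\<Sum>x\<in>H. a x * matrix_coeff T y x)"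
  using assms(2,3)
proof (induction H rule: finite_induct)
  case empty
  then show ?case using bounded_op_zero[OF T] by simp
next
  case (insert x H)
  have "(\<lambda>z. \<Sum>x\<in>H. a x * delta x z) \<in> l2 X"
    by (rule l2_finite_support[of H])
      (use insert in \<open>auto simp: delta_def if_distrib cong: if_cong\<close>)
  moreover have "(\<lambda>z. a x * delta x z) \<in> l2 X"
    using insert by (intro l2_scale delta_l2) auto
  ultimately show ?case
    using insert bounded_op_add[OF T] bounded_op_scale[OF T delta_l2[of x X], of "a x"]
    by (simp add: matrix_coeff_def)
qed

lemma opnorm_le:
  assumes "\<And>f. f \<in> l2 X \<Longrightarrow> l2norm X f \<le> 1 \<Longrightarrow> l2norm Y (T f) \<le> c"
  shows "opnorm X Y T \<le> c"
  unfolding opnorm_def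
proof (rule cSup_least)
  show "{l2norm Y (T f) |f. f \<in> l2 X \<and> l2norm X f \<le> 1} \<noteq> {}"
    using l2_zero[of X] l2norm_zero[of X] by auto
qed (use assms in auto)

lemma in_Md_if_finite_propagation:
  assumes "bounded_op X Y T" "finite_propagation X Y d T"
  shows "in_Md X Y d T"
proof -
  have "opnorm X Y (\<lambda>f y. T f y - T f y) \<le> 0"
    by (rule opnorm_le) (simp add: l2norm_zero)
  thus ?thesis using assms unfolding in_Md_def by force
qed

lemma compact_op_totally_bounded:
  assumes "compact_op X Y T"
  shows "Metric_space.mtotally_bounded (l2 Y) (l2dist Y) (T ` {f \<in> l2 X. l2norm X f \<le> 1})"
proof -
  interpret M: Metric_space "l2 Y" "l2dist Y" by (rule Metric_space_l2)
  let ?TB = "T ` {f \<in> l2 X. l2norm X f \<le> 1}"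
  have "M.mtotally_bounded (M.mtopology closure_of ?TB)"
    using assms unfolding compact_op_def by (blast intro: M.compactin_imp_mtotally_bounded)
  moreover have "?TB \<subseteq> M.mtopology closure_of ?TB"
    using assms by (intro closure_of_subset) (auto simp: compact_op_def bounded_op_def)
  ultimately show ?thesis by (rule M.mtotally_bounded_subset)
qed

section \<open>Compact operators are norm limits of compressions\<close>

lemma matrix_row_summable:
  assumes T: "bounded_op X Y T"
  shows "(\<lambda>x. (cmod (matrix_coeff T y x))\<^sup>2) summable_on X"
proof -
  obtain C where C: "\<And>f. f \<in> l2 X \<Longrightarrow> l2norm Y (T f) \<le> C * l2norm X f"
    using bounded_op_bound[OF T] by blast
  define c where "c x = matrix_coeff T y x" for x
  have "(\<Sum>x\<in>H. (cmod (c x))\<^sup>2) \<le> C\<^sup>2" if H: "finite H" "H \<subseteq> X" for H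
  proof -
    define s where "s = (\<Sum>x\<in>H. (cmod (c x))\<^sup>2)"
    have s0: "s \<ge> 0" by (simp add: s_def sum_nonneg)
    \<comment> \<open>test T against the conjugated row, truncated to H\<close>
    define v where "v = restr H (\<lambda>x. cnj (c x))"
    have v: "v \<in> l2 X" "l2norm X v = sqrt s"
      using l2_finite_support[of H X v] l2norm_finite_support[of H X v] H
      by (auto simp: v_def restr_def s_def L2_set_def)
    have "T v y = (\<Sum>x\<in>H. cnj (c x) * c x)"
      unfolding v_def restr_finite_eq_sum[OF H(1)] by (simp add: bounded_op_finite_sum[OF T H] c_def)
    also have "\<dots> = of_real s" unfolding s_def of_real_sum
      by (intro sum.cong refl) (simp add: complex_mult_cnj cmod_power2 mult.commute)
    finally have "sqrt s * sqrt s = cmod (T v y)" using s0 by simp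
    also have "\<dots> \<le> l2norm Y (T v)" by (rule norm_le_l2norm[OF bounded_op_l2[OF T v(1)]])
    also have "\<dots> \<le> C * sqrt s" using C[OF v(1)] v(2) by simp
    finally have le: "sqrt s * sqrt s \<le> C * sqrt s" .
    have "sqrt s \<le> C \<or> s = 0"
      using le s0 by (metis mult_le_cancel_right_pos real_sqrt_gt_0_iff less_eq_real_def)
    hence "s \<le> C\<^sup>2" using s0 power_mono[of "sqrt s" C 2] by auto
    thus ?thesis by (simp add: s_def)
  qed
  hence "bdd_above (sum (\<lambda>x. (cmod (c x))\<^sup>2) ` {F. F \<subseteq> X \<and> finite F})"
    by (intro bdd_aboveI2) auto
  thus ?thesis unfolding c_def[symmetric] by (rule nonneg_bdd_above_summable_on[rotated]) simp
qed

lemma bounded_op_coordinate_small_off_finite: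
  assumes T: "bounded_op X Y T" and "\<eta> > 0"
  obtains F where "finite F" "F \<subseteq> X"
    "\<And>g. g \<in> l2 X \<Longrightarrow> l2norm X g \<le> 1 \<Longrightarrow> (\<And>x. x \<in> F \<Longrightarrow> g x = 0) \<Longrightarrow> cmod (T g y) \<le> \<eta>"
proof -
  obtain C where C0: "C \<ge> 0" and C: "\<And>f. f \<in> l2 X \<Longrightarrow> l2norm Y (T f) \<le> C * l2norm X f"
    using bounded_op_bound[OF T] by blast
  define c where "c x = matrix_coeff T y x" for x
  obtain F where F: "finite F" "F \<subseteq> X"
    and tail: "\<And>H. finite H \<Longrightarrow> H \<subseteq> X - F \<Longrightarrow> (\<Sum>x\<in>H. (cmod (c x))\<^sup>2) \<le> \<eta>\<^sup>2"
    using summable_on_small_tails[OF matrix_row_summable[OF T, of y], of "\<eta>\<^sup>2"] assms(2)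
    unfolding c_def by auto
  have "cmod (T g y) \<le> \<eta>" if g: "g \<in> l2 X" "l2norm X g \<le> 1" "\<And>x. x \<in> F \<Longrightarrow> g x = 0" for g
  proof (rule field_le_epsilon)
    fix e :: real assume e: "e > 0"
    obtain H where H: "finite H" "H \<subseteq> X" and small: "l2norm X (restr (-H) g) \<le> e / (C + 1)"
      using l2_small_tail[OF g(1), of "e / (C + 1)"] e C0 by auto
    have "cmod (T (restr (-H) g) y) \<le> C * l2norm X (restr (-H) g)"
      using norm_le_l2norm[OF bounded_op_l2[OF T l2_restr[OF g(1)]]] C[OF l2_restr[OF g(1)]]
      by (rule order_trans)
    also have "\<dots> \<le> C * (e / (C + 1))" using small C0 by (intro mult_left_mono) auto
    also have "\<dots> \<le> e" using C0 e by (simp add: field_simps)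
    finally have far: "cmod (T (restr (-H) g) y) \<le> e" .
    have "T (restr H g) y = (\<Sum>x\<in>H - F. g x * c x)"
      unfolding restr_finite_eq_sum[OF H(1)] bounded_op_finite_sum[OF T H] c_def
      using H g(3) by (intro sum.mono_neutral_right) auto
    hence "cmod (T (restr H g) y) \<le> (\<Sum>x\<in>H - F. \<bar>cmod (g x)\<bar> * \<bar>cmod (c x)\<bar>)"
      by (auto intro: order_trans[OF norm_sum] simp: norm_mult)
    also have "\<dots> \<le> L2_set (\<lambda>x. cmod (g x)) (H - F) * L2_set (\<lambda>x. cmod (c x)) (H - F)"
      by (rule L2_set_mult_ineq)
    also have "\<dots> \<le> 1 * \<eta>"
    proof (rule mult_mono)
      show "L2_set (\<lambda>x. cmod (g x)) (H - F) \<le> 1"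
        using order_trans[OF L2_set_le_l2norm[OF g(1)] g(2)] H by auto
      show "L2_set (\<lambda>x. cmod (c x)) (H - F) \<le> \<eta>"
        using real_sqrt_le_mono[OF tail[of "H - F"]] H assms(2) by (auto simp: L2_set_def)
    qed (auto simp: L2_set_nonneg)
    finally have near: "cmod (T (restr H g) y) \<le> \<eta>" by simp
    show "cmod (T g y) \<le> \<eta> + e"
      using bounded_op_restr_split[OF T g(1), of H] near far norm_triangle_ineq
      by (smt (verit))
  qed
  thus ?thesis using F that by blast
qed

lemma bounded_op_coordinates_small_off_finite:
  assumes T: "bounded_op X Y T" and G: "finite G" and "\<eta> > 0"
  obtains F where "finite F" "F \<subseteq> X"
    "\<And>g y. g \<in> l2 X \<Longrightarrow> l2norm X g \<le> 1 \<Longrightarrow> (\<And>x. x \<in> F \<Longrightarrow> g x = 0) \<Longrightarrow> y \<in> G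
       \<Longrightarrow> cmod (T g y) \<le> \<eta>"
proof -
  have "\<forall>y\<in>G. \<exists>F. finite F \<and> F \<subseteq> X \<and> (\<forall>g. g \<in> l2 X \<longrightarrow> l2norm X g \<le> 1
          \<longrightarrow> (\<forall>x\<in>F. g x = 0) \<longrightarrow> cmod (T g y) \<le> \<eta>)"
    by (metis bounded_op_coordinate_small_off_finite[OF T assms(3)])
  then obtain Fy where Fy: "\<And>y. y \<in> G \<Longrightarrow> finite (Fy y) \<and> Fy y \<subseteq> X \<and> (\<forall>g. g \<in> l2 X
          \<longrightarrow> l2norm X g \<le> 1 \<longrightarrow> (\<forall>x\<in>Fy y. g x = 0) \<longrightarrow> cmod (T g y) \<le> \<eta>)"
    by metis
  show ?thesis
  proof (rule that[of "\<Union>(Fy ` G)"])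
    fix g y
    assume "g \<in> l2 X" "l2norm X g \<le> 1" "\<And>x. x \<in> \<Union>(Fy ` G) \<Longrightarrow> g x = 0" "y \<in> G"
    thus "cmod (T g y) \<le> \<eta>" using Fy by blast
  qed (use Fy G in auto)
qed

lemma totally_bounded_uniformly_small_tails:
  assumes tb: "Metric_space.mtotally_bounded (l2 Y) (l2dist Y) K" and e: "e > 0"
  obtains G where "finite G" "G \<subseteq> Y" "\<And>k. k \<in> K \<Longrightarrow> l2norm Y (restr (-G) k) \<le> e"
proof -
  interpret M: Metric_space "l2 Y" "l2dist Y" by (rule Metric_space_l2)
  obtain N where N: "finite N" "K \<subseteq> (\<Union>n\<in>N. M.mball n (e/2))"
    using tb e unfolding M.mtotally_bounded_def by (meson half_gt_zero)
  have "\<forall>n\<in>N \<inter> l2 Y. \<exists>G. finite G \<and> G \<subseteq> Y \<and> l2norm Y (restr (-G) n) \<le> e/2"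
    using l2_small_tail e by (metis IntD2 half_gt_zero)
  then obtain Gn where Gn: "\<And>n. n \<in> N \<inter> l2 Y
      \<Longrightarrow> finite (Gn n) \<and> Gn n \<subseteq> Y \<and> l2norm Y (restr (- Gn n) n) \<le> e/2"
    by metis
  define G where "G = \<Union>(Gn ` (N \<inter> l2 Y))"
  have "l2norm Y (restr (-G) k) \<le> e" if k: "k \<in> K" for k
  proof -
    obtain n where n: "n \<in> N" "n \<in> l2 Y" "k \<in> l2 Y" "l2dist Y n k < e/2"
      using N(2) k by auto
    have "restr (-G) k = (\<lambda>y. restr (-G) (\<lambda>y. k y - n y) y + restr (-G) (restr (- Gn n) n) y)"
      using n by (auto simp: restr_def G_def)
    hence "l2norm Y (restr (-G) k)
        \<le> l2norm Y (restr (-G) (\<lambda>y. k y - n y)) + l2norm Y (restr (-G) (restr (- Gn n) n))"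
      using n by (simp add: l2norm_triangle l2_restr l2_diff)
    also have "\<dots> \<le> l2norm Y (\<lambda>y. k y - n y) + l2norm Y (restr (- Gn n) n)"
      using n by (intro add_mono l2norm_restr_le l2_diff l2_restr)
    also have "\<dots> \<le> e/2 + e/2"
      using n Gn M.commute[of n k] by (intro add_mono) (auto simp: l2dist_def)
    finally show ?thesis by simp
  qed
  moreover have "finite G" "G \<subseteq> Y" using Gn N(1) by (auto simp: G_def)
  ultimately show ?thesis using that by blast
qed

definition compression ::
  "'a set \<Rightarrow> 'b set \<Rightarrow> (('a \<Rightarrow> complex) \<Rightarrow> ('b \<Rightarrow> complex)) \<Rightarrow> ('a \<Rightarrow> complex) \<Rightarrow> ('b \<Rightarrow> complex)"
  where "compression F G T = (\<lambda>f. restr G (T (restr F f)))"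

lemma bounded_op_compression:
  assumes T: "bounded_op X Y T"
  shows "bounded_op X Y (compression F G T)"
  unfolding bounded_op_def
proof (intro conjI ballI allI)
  obtain C where C0: "C \<ge> 0" and C: "\<And>f. f \<in> l2 X \<Longrightarrow> l2norm Y (T f) \<le> C * l2norm X f"
    using bounded_op_bound[OF T] by blast
  have "l2norm Y (compression F G T f) \<le> C * l2norm X f" if f: "f \<in> l2 X" for f
  proof -
    have "l2norm Y (compression F G T f) \<le> l2norm Y (T (restr F f))"
      unfolding compression_def by (intro l2norm_restr_le bounded_op_l2[OF T] l2_restr f)
    also have "\<dots> \<le> C * l2norm X (restr F f)" by (intro C l2_restr f)
    also have "\<dots> \<le> C * l2norm X f" by (intro mult_left_mono C0 l2norm_restr_le f)
    finally show ?thesis .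
  qed
  thus "\<exists>C. \<forall>f\<in>l2 X. l2norm Y (compression F G T f) \<le> C * l2norm X f" by blast
next
  fix f g assume f: "f \<in> l2 X" and g: "g \<in> l2 X"
  have "restr F (\<lambda>x. f x + g x) = (\<lambda>x. restr F f x + restr F g x)" by (auto simp: restr_def)
  thus "compression F G T (\<lambda>x. f x + g x) = (\<lambda>y. compression F G T f y + compression F G T g y)"
    unfolding compression_def using bounded_op_add[OF T l2_restr[OF f] l2_restr[OF g]]
    by (auto simp: restr_def)
next
  fix f c assume f: "f \<in> l2 X"
  have "restr F (\<lambda>x. c * f x) = (\<lambda>x. c * restr F f x)" by (auto simp: restr_def)
  thus "compression F G T (\<lambda>x. c * f x) = (\<lambda>y. c * compression F G T f y)"
    unfolding compression_def using bounded_op_scale[OF T l2_restr[OF f]]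
    by (auto simp: restr_def)
qed (simp add: compression_def l2_restr bounded_op_l2[OF T])

lemma finite_propagation_compression:
  assumes T: "bounded_op X Y T" and "finite F" "finite G"
  shows "finite_propagation X Y d (compression F G T)"
  unfolding finite_propagation_def
proof (intro exI ballI impI)
  define L where "L = Max (insert 0 ((\<lambda>(x, y). d (Inl x) (Inr y)) ` (F \<times> G))) + 1"
  fix x y assume "x \<in> X" "y \<in> Y" and far: "L \<le> d (Inl x) (Inr y)"
  have "x \<notin> F \<or> y \<notin> G"
  proof (rule ccontr)
    assume "\<not> (x \<notin> F \<or> y \<notin> G)"
    hence "d (Inl x) (Inr y) \<le> Max (insert 0 ((\<lambda>(x, y). d (Inl x) (Inr y)) ` (F \<times> G)))"
      using assms by (intro Max_ge) auto
    thus False using far by (simp add: L_def)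
  qed
  moreover have "x \<notin> F \<Longrightarrow> restr F (delta x) = (\<lambda>x. 0)" by (auto simp: restr_def delta_def)
  ultimately show "matrix_coeff (compression F G T) y x = 0"
    unfolding matrix_coeff_def compression_def using bounded_op_zero[OF T] by (auto simp: restr_def)
qed

lemma compact_op_approx_by_compression:
  assumes C: "compact_op X Y T" and \<epsilon>: "\<epsilon> > 0"
  obtains F G where "finite F" "finite G"
    "\<And>f. f \<in> l2 X \<Longrightarrow> l2norm X f \<le> 1 \<Longrightarrow> l2norm Y (\<lambda>y. T f y - compression F G T f y) \<le> \<epsilon>"
proof -
  have T: "bounded_op X Y T" using C by (simp add: compact_op_def)
  obtain G where G: "finite G" "G \<subseteq> Y"
    and tail: "\<And>k. k \<in> T ` {f \<in> l2 X. l2norm X f \<le> 1} \<Longrightarrow> l2norm Y (restr (-G) k) \<le> \<epsilon>/2"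
    using totally_bounded_uniformly_small_tails[OF compact_op_totally_bounded[OF C] half_gt_zero[OF \<epsilon>]]
    by blast
  define \<eta> where "\<eta> = \<epsilon> / (2 * (real (card G) + 1))"
  have \<eta>: "\<eta> > 0" using \<epsilon> by (simp add: \<eta>_def add_pos_nonneg)
  obtain F where F: "finite F" "F \<subseteq> X"
    and coord: "\<And>g y. g \<in> l2 X \<Longrightarrow> l2norm X g \<le> 1 \<Longrightarrow> (\<And>x. x \<in> F \<Longrightarrow> g x = 0) \<Longrightarrow> y \<in> G
      \<Longrightarrow> cmod (T g y) \<le> \<eta>"
    using bounded_op_coordinates_small_off_finite[OF T G(1) \<eta>] by blast
  have "l2norm Y (\<lambda>y. T f y - compression F G T f y) \<le> \<epsilon>" if f: "f \<in> l2 X" "l2norm X f \<le> 1" for f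
  proof -
    let ?g = "restr (-F) f"
    have g: "?g \<in> l2 X" "l2norm X ?g \<le> 1"
      using l2_restr[OF f(1)] order_trans[OF l2norm_restr_le[OF f(1)] f(2)] by auto
    have "T f y - compression F G T f y = restr (-G) (T f) y + restr G (T ?g) y" for y
      using fun_cong[OF bounded_op_restr_split[OF T f(1), of F], of y]
      by (simp add: compression_def restr_def)
    hence "l2norm Y (\<lambda>y. T f y - compression F G T f y)
        \<le> l2norm Y (restr (-G) (T f)) + l2norm Y (restr G (T ?g))"
      by (simp add: l2norm_triangle l2_restr bounded_op_l2[OF T] f g)
    also have "l2norm Y (restr G (T ?g)) = L2_set (\<lambda>y. cmod (T ?g y)) G"
      using G by (subst l2norm_finite_support[of G]) (auto simp: restr_def intro!: L2_set_cong)
    also have "\<dots> \<le> (\<Sum>y\<in>G. cmod (T ?g y))" by (rule L2_set_le_sum) simp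
    also have "\<dots> \<le> real (card G) * \<eta>"
      using coord[OF g] by (intro sum_bounded_above) (auto simp: restr_def)
    also have "\<dots> \<le> \<epsilon>/2"
      using \<epsilon> by (simp add: \<eta>_def field_simps)
    finally show ?thesis using tail[of "T f"] f by simp
  qed
  thus ?thesis using F G that by blast
qed

lemma compact_op_in_Md:
  assumes "compact_op X Y T"
  shows "in_Md X Y d T"
proof -
  have T: "bounded_op X Y T" using assms by (simp add: compact_op_def)
  have "\<exists>S. bounded_op X Y S \<and> finite_propagation X Y d S \<and> opnorm X Y (\<lambda>f y. T f y - S f y) < \<epsilon>"
    if "\<epsilon> > 0" for \<epsilon>
  proof -
    obtain F G where FG: "finite F" "finite G" and approx:
      "\<And>f. f \<in> l2 X \<Longrightarrow> l2norm X f \<le> 1 \<Longrightarrow> l2norm Y (\<lambda>y. T f y - compression F G T f y) \<le> \<epsilon>/2"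
      using compact_op_approx_by_compression[OF assms, of "\<epsilon>/2"] \<open>\<epsilon> > 0\<close> by auto
    have "opnorm X Y (\<lambda>f y. T f y - compression F G T f y) \<le> \<epsilon>/2"
      by (rule opnorm_le) (rule approx)
    thus ?thesis using \<open>\<epsilon> > 0\<close> bounded_op_compression[OF T] finite_propagation_compression[OF T FG]
      by (intro exI[of _ "compression F G T"]) auto
  qed
  thus ?thesis using T by (simp add: in_Md_def)
qed

section \<open>Partial translations\<close>

definition partial_translation :: "'a set \<Rightarrow> ('a \<Rightarrow> 'b) \<Rightarrow> ('a \<Rightarrow> complex) \<Rightarrow> 'b \<Rightarrow> complex" where
  "partial_translation A f h = (\<lambda>y. if y \<in> f ` A then h (inv_into A f y) else 0)"

lemma partial_translation_delta:
  "inj_on f A \<Longrightarrow> x \<in> A \<Longrightarrow> partial_translation A f (delta x) = delta (f x)"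
  by (auto simp: partial_translation_def delta_def fun_eq_iff)

lemma
  assumes A: "A \<subseteq> X" "inj_on f A" "f ` A \<subseteq> Y" and h: "h \<in> l2 X"
  shows l2_partial_translation: "partial_translation A f h \<in> l2 Y"
    and l2norm_partial_translation_le: "l2norm Y (partial_translation A f h) \<le> l2norm X h"
proof -
  define g where "g y = (cmod (partial_translation A f h y))\<^sup>2" for y
  have g_f: "(g \<circ> f) x = (cmod (h x))\<^sup>2" if "x \<in> A" for x
    using A(2) that by (simp add: g_def partial_translation_def)
  have g_out: "g y = 0" if "y \<notin> f ` A" for y
    using that by (simp add: g_def partial_translation_def)
  have hA: "(\<lambda>x. (cmod (h x))\<^sup>2) summable_on A"
    using summable_on_subset[OF l2D(1)[OF h] A(1)] .
  hence "g summable_on f ` A"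
    by (simp only: summable_on_reindex[OF A(2)] summable_on_cong[OF g_f])
  moreover have "g summable_on Y \<longleftrightarrow> g summable_on f ` A"
    using A(3) g_out by (intro summable_on_cong_neutral) auto
  ultimately have "(\<lambda>y. (cmod (partial_translation A f h y))\<^sup>2) summable_on Y"
    by (simp add: g_def[abs_def])
  thus "partial_translation A f h \<in> l2 Y"
    using A(3) by (intro l2I) (auto simp: partial_translation_def)
  have "infsum g Y = infsum g (f ` A)"
    using A(3) g_out by (intro infsum_cong_neutral) auto
  also have "\<dots> = infsum (\<lambda>x. (cmod (h x))\<^sup>2) A"
    by (simp only: infsum_reindex[OF A(2)] infsum_cong[OF g_f])
  also have "\<dots> \<le> infsum (\<lambda>x. (cmod (h x))\<^sup>2) X"
    using A(1) by (intro infsum_mono_neutral[OF hA l2D(1)[OF h]]) auto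
  finally show "l2norm Y (partial_translation A f h) \<le> l2norm X h"
    unfolding l2norm_def g_def by (rule real_sqrt_le_mono)
qed

lemma bounded_op_partial_translation:
  assumes "A \<subseteq> X" "inj_on f A" "f ` A \<subseteq> Y"
  shows "bounded_op X Y (partial_translation A f)"
  unfolding bounded_op_def
proof (intro conjI ballI allI)
  show "\<exists>C. \<forall>h\<in>l2 X. l2norm Y (partial_translation A f h) \<le> C * l2norm X h"
    using l2norm_partial_translation_le[OF assms] by (intro exI[of _ 1]) auto
  show "partial_translation A f h \<in> l2 Y" if "h \<in> l2 X" for h
    by (rule l2_partial_translation[OF assms that])
qed (simp_all add: partial_translation_def fun_eq_iff)

lemma finite_propagation_partial_translation:
  assumes "inj_on f A" "\<And>x. x \<in> A \<Longrightarrow> d (Inl x) (Inr (f x)) \<le> L"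
  shows "finite_propagation X Y d (partial_translation A f)"
  unfolding finite_propagation_def
proof (intro exI[of _ "L + 1"] ballI impI)
  fix x y assume far: "L + 1 \<le> d (Inl x) (Inr y)"
  show "matrix_coeff (partial_translation A f) y x = 0"
  proof (rule ccontr)
    assume "matrix_coeff (partial_translation A f) y x \<noteq> 0"
    hence "y \<in> f ` A" "inv_into A f y = x"
      by (auto simp: matrix_coeff_def partial_translation_def delta_def split: if_splits)
    hence "x \<in> A" "y = f x" using assms(1) by auto
    thus False using assms(2)[of x] far by simp
  qed
qed

lemma totally_bounded_deltas_finite:
  assumes tb: "Metric_space.mtotally_bounded (l2 Y) (l2dist Y) S"
    and B: "B \<subseteq> Y" "delta ` B \<subseteq> S"
  shows "finite B"
proof -
  interpret M: Metric_space "l2 Y" "l2dist Y" by (rule Metric_space_l2)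
  obtain K where K: "finite K" "S \<subseteq> (\<Union>k\<in>K. M.mball k (1/2))"
    using tb unfolding M.mtotally_bounded_def by (meson half_gt_zero zero_less_one)
  hence "\<forall>y\<in>B. \<exists>k\<in>K. delta y \<in> M.mball k (1/2)" using B(2) by blast
  then obtain c where c: "\<And>y. y \<in> B \<Longrightarrow> c y \<in> K \<and> delta y \<in> M.mball (c y) (1/2)"
    by metis
  \<comment> \<open>distinct deltas are at distance at least 1, so they lie in distinct balls of radius 1/2\<close>
  have "inj_on c B"
  proof (rule inj_onI)
    fix y y' assume y: "y \<in> B" "y' \<in> B" "c y = c y'"
    have "l2dist Y (delta y) (delta y') \<le> l2dist Y (delta y) (c y) + l2dist Y (c y) (delta y')"
      using c[OF y(1)] c[OF y(2)] y(3) by (intro M.triangle) auto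
    also have "\<dots> < 1"
      using c[OF y(1)] c[OF y(2)] y(3) M.commute[of "c y" "delta y"] by auto
    finally show "y = y'" using l2dist_delta_ge_1[of y Y y'] y B(1) by auto
  qed
  moreover have "c ` B \<subseteq> K" using c by blast
  ultimately show ?thesis using K(1) finite_subset inj_on_finite by blast
qed

lemma compact_partial_translation_finite:
  assumes "compact_op X Y (partial_translation A f)" "A \<subseteq> X" "inj_on f A" "f ` A \<subseteq> Y"
  shows "finite A"
proof -
  have "delta ` f ` A \<subseteq> partial_translation A f ` {h \<in> l2 X. l2norm X h \<le> 1}"
  proof
    fix y assume "y \<in> delta ` f ` A"
    then obtain x where x: "x \<in> A" "y = delta (f x)" by blast
    hence "delta x \<in> {h \<in> l2 X. l2norm X h \<le> 1}"
      using assms(2) by (auto simp: delta_l2 l2norm_delta)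
    moreover have "y = partial_translation A f (delta x)"
      using partial_translation_delta[OF assms(3) x(1)] x(2) by simp
    ultimately show "y \<in> partial_translation A f ` {h \<in> l2 X. l2norm X h \<le> 1}" by blast
  qed
  hence "finite (f ` A)"
    using totally_bounded_deltas_finite[OF compact_op_totally_bounded[OF assms(1)] assms(4)] by blast
  thus ?thesis using assms(3) finite_image_iff by blast
qed

lemma Md_compact_imp_finite_near_points:
  assumes "\<forall>T. in_Md X Y d T \<longrightarrow> compact_op X Y T"
    and f: "f \<in> X \<rightarrow> Y" "inj_on f X"
  shows "finite {x \<in> X. d (Inl x) (Inr (f x)) \<le> L}"
proof -
  let ?A = "{x \<in> X. d (Inl x) (Inr (f x)) \<le> L}"
  have A: "?A \<subseteq> X" "inj_on f ?A" "f ` ?A \<subseteq> Y"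
    using f inj_on_subset by fastforce+
  have "in_Md X Y d (partial_translation ?A f)"
    using A by (intro in_Md_if_finite_propagation bounded_op_partial_translation
        finite_propagation_partial_translation[of f ?A d L]) auto
  thus ?thesis using assms(1) compact_partial_translation_finite[OF _ A] by blast
qed

theorem mainTheorem2:
  fixes X :: "'a set" and Y :: "'b set"
    and dX :: "'a \<Rightarrow> 'a \<Rightarrow> real" and dY :: "'b \<Rightarrow> 'b \<Rightarrow> real"
    and d :: "('a + 'b) \<Rightarrow> ('a + 'b) \<Rightarrow> real"
  assumes "countable X" and "countable Y"
    and "discrete_metric_space X dX" and "discrete_metric_space Y dY"
    and "d \<in> Dmetrics X dX Y dY"
  shows "(\<forall>T. compact_op X Y T \<longrightarrow> in_Md X Y d T) \<and>
         ((\<forall>T. compact_op X Y T \<longleftrightarrow> in_Md X Y d T) \<longrightarrow>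
            (\<exists>L>0. \<forall>f. f \<in> X \<rightarrow> Y \<and> inj_on f X \<longrightarrow>
                 finite {x \<in> X. d (Inl x) (Inr (f x)) \<le> L}))"
proof (intro conjI allI impI)
  show "in_Md X Y d T" if "compact_op X Y T" for T
    using that by (rule compact_op_in_Md)
  assume "\<forall>T. compact_op X Y T \<longleftrightarrow> in_Md X Y d T"
  hence "\<forall>T. in_Md X Y d T \<longrightarrow> compact_op X Y T" by blast
  thus "\<exists>L>0. \<forall>f. f \<in> X \<rightarrow> Y \<and> inj_on f X \<longrightarrow> finite {x \<in> X. d (Inl x) (Inr (f x)) \<le> L}"
    using Md_compact_imp_finite_near_points[of X Y d] by (intro exI[of _ 1]) auto
qed

end
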